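(* Let $(X,r)$ be a non-degenerate involutive set-theoretic solution with $X=\{1,\dots,n\}$, $r(i,j)=(\sigma_i(j),\gamma_j(i))$, let $V$ be the vector space with basis $v_1,\dots,v_n$ and $c\in\mathrm{End}(V\otimes V)$ the operator $c(v_i\otimes v_j)=v_{\sigma_i(j)}\otimes v_{\gamma_j(i)}$. Then the algebra $A(c)$ is the quotient of the free algebra $F$ generated by $\{T_i^k: 1\le i,k\le n\}$ by the two-sided ideal $I(c)$ generated by all the elements $$C_{ij}^{kl}=T_{\sigma_i(j)}^{k}T_{\gamma_j(i)}^{l}-T_i^{\sigma_k(l)}T_j^{\gamma_l(k)},$$ and in particular $$C_{\sigma_i(j)\gamma_j(i)}^{kl}=T_i^kT_j^l-T_{\sigma_i(j)}^{\sigma_k(l)}T_{\gamma_j(i)}^{\gamma_l(k)}$$ (where $C_{\sigma_i(j)\gamma_j(i)}^{kl}$ denotes $C_{ab}^{kl}$ with $a=\sigma_i(j)$, $b=\gamma_j(i)$). Furthermore: (i) $C_{\sigma_i(j)\gamma_j(i)}^{\sigma_k(l)\gamma_l(k)}=-C_{ij}^{kl}$; (ii) $C_{ij}^{\sigma_k(l)\gamma_l(k)}=-C_{\sigma_i(j)\gamma_j(i)}^{kl}$; (iii) if $r(i,j)=(i,j)$, then $C_{ij}^{\sigma_k(l)\gamma_l(k)}=\pm C_{ij}^{kl}$; (iv) if $r(k,l)=(k,l)$, then $C_{\sigma_i(j)\gamma_j(i)}^{kl}=\pm C_{ij}^{kl}$; (v) if $r(i,j)=(i,j)$ and $r(k,l)=(k,l)$,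 then $C_{ij}^{kl}=0$; (vi) there are $\binom{n^2}{2}$ elements in the set $\{C_{ij}^{kl}\}/\pm$.
   Context: A set-theoretic solution of the Yang–Baxter equation is $r:X\times X\to X\times X$, $r(x,y)=(\sigma_x(y),\gamma_y(x))$, with $r^{12}r^{23}r^{12}=r^{23}r^{12}r^{23}$; non-degenerate means all $\sigma_x,\gamma_x$ bijective, involutive means $r\circ r=\mathrm{Id}$. FRT construction: for $c\in\mathrm{End}(V\otimes V)$ with coefficients defined by $c(v_i\otimes v_j)=\sum_{p,q}c_{ij}^{pq}v_p\otimes v_q$, the algebra $A(c)$ is defined as the quotient of the free algebra generated by $\{T_i^k:1\le i,k\le n\}$ by the two-sided ideal $I(c)$ generated by all elements $C_{ij}^{kl}=\sum_{p,q}c_{ij}^{pq}T_p^kT_q^l-\sum_{p,q}T_i^pT_j^q\,c_{pq}^{kl}$, with $i,j,k,l$ ranging over $\{1,\dots,n\}$. *)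

theory Defs
  imports Main "HOL-Library.Poly_Mapping"
begin

text \<open>r(x,y) = (sigma x y, gamma y x); here sigma x stands for sigma_x and gamma y for gamma_y.\<close>
definition sol_r :: "(nat \<Rightarrow> nat \<Rightarrow> nat) \<Rightarrow> (nat \<Rightarrow> nat \<Rightarrow> nat) \<Rightarrow> nat \<times> nat \<Rightarrow> nat \<times> nat" where
  "sol_r sigma gamma = (\<lambda>(x, y). (sigma x y, gamma y x))"

definition r12 :: "(nat \<times> nat \<Rightarrow> nat \<times> nat) \<Rightarrow> nat \<times> nat \<times> nat \<Rightarrow> nat \<times> nat \<times> nat" where
  "r12 r = (\<lambda>(x, y, z). (fst (r (x, y)), snd (r (x, y)), z))"

definition r23 :: "(nat \<times> nat \<Rightarrow> nat \<times> nat) \<Rightarrow> nat \<times> nat \<times> nat \<Rightarrow> nat \<times> nat \<times> nat" where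
  "r23 r = (\<lambda>(x, y, z). (x, fst (r (y, z)), snd (r (y, z))))"

definition nondeg_invol_solution :: "nat \<Rightarrow> (nat \<Rightarrow> nat \<Rightarrow> nat) \<Rightarrow> (nat \<Rightarrow> nat \<Rightarrow> nat) \<Rightarrow> bool" where
  "nondeg_invol_solution n sigma gamma \<longleftrightarrow>
     (\<forall>x\<in>{1..n}. bij_betw (sigma x) {1..n} {1..n} \<and> bij_betw (gamma x) {1..n} {1..n}) \<and>
     (\<forall>t\<in>{1..n} \<times> {1..n} \<times> {1..n}.
        (r12 (sol_r sigma gamma) \<circ> r23 (sol_r sigma gamma) \<circ> r12 (sol_r sigma gamma)) t =
        (r23 (sol_r sigma gamma) \<circ> r12 (sol_r sigma gamma) \<circ> r23 (sol_r sigma gamma)) t) \<and>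
     (\<forall>p\<in>{1..n} \<times> {1..n}. sol_r sigma gamma (sol_r sigma gamma p) = p)"

text \<open>Elements of the free (noncommutative) algebra generated by the T_i^k, encoded as
  finitely supported coefficient functions on words; the generator T_i^k is the letter (i,k).\<close>
type_synonym 'k free_alg = "(nat \<times> nat) list \<Rightarrow>\<^sub>0 'k"

definition fmult :: "'k::field free_alg \<Rightarrow> 'k free_alg \<Rightarrow> 'k free_alg" (infixl \<open>\<cdot>\<^sub>F\<close> 70) where
  "fmult p q = (\<Sum>u\<in>Poly_Mapping.keys p. \<Sum>v\<in>Poly_Mapping.keys q.
                  Poly_Mapping.single (u @ v) (Poly_Mapping.lookup p u * Poly_Mapping.lookup q v))"

definition fscal :: "'k::field \<Rightarrow> 'k free_alg \<Rightarrow> 'k free_alg" where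
  "fscal a p = Poly_Mapping.single [] a \<cdot>\<^sub>F p"

definition gen :: "nat \<Rightarrow> nat \<Rightarrow> 'k::field free_alg" (\<open>T\<close>) where
  "gen i k = Poly_Mapping.single [(i, k)] 1"

text \<open>Coefficients c_ij^pq of c(v_i \<otimes> v_j) = v_(sigma_i j) \<otimes> v_(gamma_j i).\<close>
definition ccoef :: "(nat \<Rightarrow> nat \<Rightarrow> nat) \<Rightarrow> (nat \<Rightarrow> nat \<Rightarrow> nat) \<Rightarrow> nat \<Rightarrow> nat \<Rightarrow> nat \<Rightarrow> nat \<Rightarrow> 'k::field" where
  "ccoef sigma gamma i j p q = (if p = sigma i j \<and> q = gamma j i then 1 else 0)"

definition FRT_C :: "nat \<Rightarrow> (nat \<Rightarrow> nat \<Rightarrow> nat \<Rightarrow> nat \<Rightarrow> 'k::field) \<Rightarrow> nat \<Rightarrow> nat \<Rightarrow> nat \<Rightarrow> nat \<Rightarrow> 'k free_alg" where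
  "FRT_C n c i j k l =
     (\<Sum>p\<in>{1..n}. \<Sum>q\<in>{1..n}. fscal (c i j p q) (T p k \<cdot>\<^sub>F T q l))
   - (\<Sum>p\<in>{1..n}. \<Sum>q\<in>{1..n}. fscal (c p q k l) (T i p \<cdot>\<^sub>F T j q))"

end

theory Submission
  imports Defs
begin

text \<open>Since r is involutive, the permutation matrix c is symmetric, so each of the two sums
  defining C_ij^kl has a single nonzero term. Writing e(a,b,k,l) for the monomial T_a^k T_b^l and
  R = r x r for the induced involution of pairs ((a,b),(k,l)), every C_ij^kl equals e(m) - e(R m)
  with m = (r(i,j),(k,l)). Identities (i)-(v) are therefore sign changes, and the classes {C, -C}
  of nonzero elements correspond to the two-element orbits of R. The fixed points of R are the
  pairs of fixed points of r, and by non-degeneracy r has exactly one fixed point (a,b) for each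
  a; hence there are (n^4 - n^2)/2 such orbits.\<close>

lemma fmult_single:
  "Poly_Mapping.single u a \<cdot>\<^sub>F Poly_Mapping.single v b = Poly_Mapping.single (u @ v) (a * (b::'k::field))"
  unfolding fmult_def by (cases "a = 0"; cases "b = 0") auto

lemma gen_fmult_gen: "(T a c \<cdot>\<^sub>F T b d :: 'k::field free_alg) = Poly_Mapping.single [(a, c), (b, d)] 1"
  unfolding gen_def by (simp add: fmult_single)

lemma fscal_single: "fscal c (Poly_Mapping.single w 1) = Poly_Mapping.single w (c::'k::field)"
  unfolding fscal_def by (simp add: fmult_single)

lemma sum_ccoef_fscal_single:
  assumes "finite A" "sigma i j \<in> A" "gamma j i \<in> A"
  shows "(\<Sum>p\<in>A. \<Sum>q\<in>A. fscal (ccoef sigma gamma i j p q) (Poly_Mapping.single (w p q) 1))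
       = Poly_Mapping.single (w (sigma i j) (gamma j i)) (1::'k::field)"
proof -
  have "fscal (ccoef sigma gamma i j p q) (Poly_Mapping.single (w p q) 1)
      = (if p = sigma i j then if q = gamma j i then Poly_Mapping.single (w p q) (1::'k) else 0 else 0)"
    for p q
    by (simp add: ccoef_def fscal_single)
  then have "(\<Sum>q\<in>A. fscal (ccoef sigma gamma i j p q) (Poly_Mapping.single (w p q) 1))
      = (if p = sigma i j then Poly_Mapping.single (w p (gamma j i)) (1::'k) else 0)" for p
    using assms by (simp add: sum.delta')
  then show ?thesis
    using assms by (simp add: sum.delta')
qed

lemma card_nontrivial_orbits_involution:
  assumes "finite M" and R_closed: "\<And>m. m \<in> M \<Longrightarrow> R m \<in> M" and R_R: "\<And>m. m \<in> M \<Longrightarrow> R (R m) = m"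
  shows "2 * card ((\<lambda>m. {m, R m}) ` {m \<in> M. R m \<noteq> m}) = card {m \<in> M. R m \<noteq> m}"
proof -
  let ?N = "{m \<in> M. R m \<noteq> m}"
  have orbit_eq: "{x, R x} = {m, R m}" if "m \<in> M" "x \<in> {m, R m}" for m x
    using that R_R by auto
  have "\<Union> ((\<lambda>m. {m, R m}) ` ?N) = ?N"
    using R_closed R_R by fastforce
  moreover have "2 * card ((\<lambda>m. {m, R m}) ` ?N) = card (\<Union> ((\<lambda>m. {m, R m}) ` ?N))"
  proof (rule card_partition)
    show "finite (\<Union> ((\<lambda>m. {m, R m}) ` ?N))"
      using \<open>finite M\<close> by auto
    show "card c = 2" if "c \<in> (\<lambda>m. {m, R m}) ` ?N" for c
      using that by auto
    show "c \<inter> c' = {}"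
      if "c \<in> (\<lambda>m. {m, R m}) ` ?N" "c' \<in> (\<lambda>m. {m, R m}) ` ?N" "c \<noteq> c'" for c c'
      using that orbit_eq by blast
  qed (use \<open>finite M\<close> in simp)
  ultimately show ?thesis by simp
qed

lemma keys_single_diff:
  assumes "u \<noteq> v"
  shows "Poly_Mapping.keys (Poly_Mapping.single u (1::'k::ring_1) - Poly_Mapping.single v 1) = {u, v}"
  using assms unfolding set_eq_iff in_keys_iff by (auto simp: lookup_minus lookup_single)

lemma card_sign_classes_single_diff:
  fixes w :: "'a \<Rightarrow> 'b" and R :: "'a \<Rightarrow> 'a"
  assumes "finite M" and R_closed: "\<And>m. m \<in> M \<Longrightarrow> R m \<in> M" and R_R: "\<And>m. m \<in> M \<Longrightarrow> R (R m) = m"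
    and "inj_on w M"
  defines "D \<equiv> \<lambda>m. Poly_Mapping.single (w m) (1::'k::ring_1) - Poly_Mapping.single (w (R m)) 1"
  shows "2 * card ((\<lambda>x. {x, - x}) ` (D ` M - {0})) = card {m \<in> M. R m \<noteq> m}"
proof -
  let ?N = "{m \<in> M. R m \<noteq> m}"
  have keys_D: "Poly_Mapping.keys (D m) = w ` {m, R m}" if "m \<in> ?N" for m
  proof -
    have "w m \<noteq> w (R m)"
      using that R_closed \<open>inj_on w M\<close> by (auto dest: inj_onD)
    then show ?thesis
      by (simp add: D_def keys_single_diff)
  qed
  have "D m = 0 \<longleftrightarrow> R m = m" if "m \<in> M" for m
  proof
    show "R m = m" if "D m = 0"
      using keys_D[of m] \<open>m \<in> M\<close> \<open>D m = 0\<close> by fastforce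
  qed (simp add: D_def)
  then have nonzero: "D ` M - {0} = D ` ?N"
    by auto
  have D_R: "D (R m) = - D m" if "m \<in> M" for m
    using R_R that by (simp add: D_def)
  have classes: "(\<lambda>x. {x, - x}) ` D ` ?N = (\<lambda>c. D ` c) ` (\<lambda>m. {m, R m}) ` ?N"
    using D_R by (auto simp: image_image intro!: image_cong)
  have inj: "inj_on (\<lambda>c. D ` c) ((\<lambda>m. {m, R m}) ` ?N)"
  proof (rule inj_onI)
    fix c c'
    assume c: "c \<in> (\<lambda>m. {m, R m}) ` ?N" and c': "c' \<in> (\<lambda>m. {m, R m}) ` ?N"
      and "D ` c = D ` c'"
    obtain m where m: "m \<in> ?N" "c = {m, R m}"
      using c by blast
    obtain m' where m': "m' \<in> ?N" "c' = {m', R m'}"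
      using c' by blast
    have "Poly_Mapping.keys (D m) \<in> Poly_Mapping.keys ` D ` c'"
      using \<open>D ` c = D ` c'\<close> m(2) by blast
    then have "w ` c = w ` c'"
      using keys_D m m' D_R by auto
    moreover have "c \<subseteq> M" "c' \<subseteq> M"
      using m m' R_closed by auto
    ultimately show "c = c'"
      using \<open>inj_on w M\<close> by (simp add: inj_on_image_eq_iff)
  qed
  have "card ((\<lambda>x. {x, - x}) ` (D ` M - {0})) = card ((\<lambda>m. {m, R m}) ` ?N)"
    unfolding nonzero classes by (rule card_image[OF inj])
  then show ?thesis
    using card_nontrivial_orbits_involution[OF assms(1-3)] by simp
qed

text \<open>Only closure and involutivity of r on {1..n}^2 are needed; the braid relation is not.\<close>

locale sol_involution =
  fixes n :: nat and sigma gamma :: "nat \<Rightarrow> nat \<Rightarrow> nat"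
  assumes sigma_closed: "\<lbrakk>a \<in> {1..n}; b \<in> {1..n}\<rbrakk> \<Longrightarrow> sigma a b \<in> {1..n}"
    and gamma_closed: "\<lbrakk>a \<in> {1..n}; b \<in> {1..n}\<rbrakk> \<Longrightarrow> gamma b a \<in> {1..n}"
    and sigma_involutive: "\<lbrakk>a \<in> {1..n}; b \<in> {1..n}\<rbrakk> \<Longrightarrow> sigma (sigma a b) (gamma b a) = a"
    and gamma_involutive: "\<lbrakk>a \<in> {1..n}; b \<in> {1..n}\<rbrakk> \<Longrightarrow> gamma (gamma b a) (sigma a b) = b"

lemma nondeg_invol_solution_imp_sol_involution:
  assumes "nondeg_invol_solution n sigma gamma"
  shows "sol_involution n sigma gamma"
proof
  fix a b assume ab: "a \<in> {1..n}" "b \<in> {1..n}"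
  then show "sigma a b \<in> {1..n}" "gamma b a \<in> {1..n}"
    using assms unfolding nondeg_invol_solution_def by (metis bij_betwE)+
  have "sol_r sigma gamma (sol_r sigma gamma (a, b)) = (a, b)"
    using assms ab unfolding nondeg_invol_solution_def by blast
  then show "sigma (sigma a b) (gamma b a) = a" "gamma (gamma b a) (sigma a b) = b"
    by (simp_all add: sol_r_def)
qed

context sol_involution
begin

lemma ccoef_sym:
  assumes "p \<in> {1..n}" "q \<in> {1..n}" "k \<in> {1..n}" "l \<in> {1..n}"
  shows "ccoef sigma gamma p q k l = ccoef sigma gamma k l p q"
proof -
  have "(k = sigma p q \<and> l = gamma q p) \<longleftrightarrow> (p = sigma k l \<and> q = gamma l k)"
    using assms sigma_involutive[of p q] gamma_involutive[of p q]
      sigma_involutive[of k l] gamma_involutive[of k l] by auto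
  then show ?thesis
    by (simp add: ccoef_def)
qed

lemma FRT_C_ccoef:
  assumes "i \<in> {1..n}" "j \<in> {1..n}" "k \<in> {1..n}" "l \<in> {1..n}"
  shows "(FRT_C n (ccoef sigma gamma) i j k l :: 'k::field free_alg)
       = T (sigma i j) k \<cdot>\<^sub>F T (gamma j i) l - T i (sigma k l) \<cdot>\<^sub>F T j (gamma l k)"
proof -
  have "(\<Sum>p\<in>{1..n}. \<Sum>q\<in>{1..n}. fscal (ccoef sigma gamma p q k l) (T i p \<cdot>\<^sub>F T j q))
      = (\<Sum>p\<in>{1..n}. \<Sum>q\<in>{1..n}. fscal (ccoef sigma gamma k l p q) (T i p \<cdot>\<^sub>F T j q) :: 'k free_alg)"
    using assms by (intro sum.cong refl) (simp add: ccoef_sym)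
  then show ?thesis
    using assms sigma_closed gamma_closed
    by (simp add: FRT_C_def gen_fmult_gen sum_ccoef_fscal_single)
qed

lemma sol_r_closed: "p \<in> {1..n} \<times> {1..n} \<Longrightarrow> sol_r sigma gamma p \<in> {1..n} \<times> {1..n}"
  using sigma_closed gamma_closed by (auto simp: sol_r_def)

lemma sol_r_involutive: "p \<in> {1..n} \<times> {1..n} \<Longrightarrow> sol_r sigma gamma (sol_r sigma gamma p) = p"
  using sigma_involutive gamma_involutive by (auto simp: sol_r_def)

lemma card_fixed_points:
  assumes bij: "\<And>a. a \<in> {1..n} \<Longrightarrow> bij_betw (sigma a) {1..n} {1..n}"
  shows "card {p \<in> {1..n} \<times> {1..n}. sol_r sigma gamma p = p} = n"
proof -
  let ?F = "{p \<in> {1..n} \<times> {1..n}. sol_r sigma gamma p = p}"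
  have "bij_betw fst ?F {1..n}"
  proof (rule bij_betw_imageI)
    show "inj_on fst ?F"
    proof (rule inj_onI)
      fix p p' assume "p \<in> ?F" "p' \<in> ?F" "fst p = fst p'"
      then obtain a b b' where "p = (a, b)" "p' = (a, b')" "a \<in> {1..n}" "b \<in> {1..n}" "b' \<in> {1..n}"
        and "sigma a b = sigma a b'"
        by (force simp: sol_r_def)
      then show "p = p'"
        using bij by (metis bij_betw_def inj_onD)
    qed
    show "fst ` ?F = {1..n}"
    proof
      show "fst ` ?F \<subseteq> {1..n}"
        by auto
      show "{1..n} \<subseteq> fst ` ?F"
      proof
        fix a assume a: "a \<in> {1..n}"
        then obtain b where b: "b \<in> {1..n}" "sigma a b = a"
          using bij by (metis bij_betw_iff_bijections)
        have "sigma a (gamma b a) = sigma a b"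
          using sigma_involutive[OF a b(1)] b(2) by simp
        then have "gamma b a = b"
          using bij[OF a] gamma_closed[OF a b(1)] b(1) by (metis bij_betw_def inj_onD)
        then show "a \<in> fst ` ?F"
          using a b by (force simp: sol_r_def)
      qed
    qed
  qed
  then show ?thesis
    by (simp add: bij_betw_same_card)
qed

lemma card_sign_classes_FRT_C:
  assumes bij: "\<And>a. a \<in> {1..n} \<Longrightarrow> bij_betw (sigma a) {1..n} {1..n}"
  shows "card ((\<lambda>x. {x, - x}) `
      ({FRT_C n (ccoef sigma gamma) i j k l :: 'k::field free_alg | i j k l.
          i \<in> {1..n} \<and> j \<in> {1..n} \<and> k \<in> {1..n} \<and> l \<in> {1..n}} - {0}))
    = (n ^ 2) choose 2"
proof -
  let ?X2 = "{1..n} \<times> {1..n}" and ?r = "sol_r sigma gamma"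
  let ?M = "?X2 \<times> ?X2" and ?R = "map_prod ?r ?r"
  define w :: "(nat \<times> nat) \<times> (nat \<times> nat) \<Rightarrow> (nat \<times> nat) list"
    where "w = (\<lambda>((a, b), (k, l)). [(a, k), (b, l)])"
  define D where "D m = Poly_Mapping.single (w m) (1::'k) - Poly_Mapping.single (w (?R m)) 1" for m
  have R_closed: "?R m \<in> ?M" if "m \<in> ?M" for m
    using that sol_r_closed by (cases m) simp
  have R_R: "?R (?R m) = m" if "m \<in> ?M" for m
    using that sol_r_involutive by (cases m) simp
  have C_D: "FRT_C n (ccoef sigma gamma) i j k l = D ((sigma i j, gamma j i), (k, l))"
    if "i \<in> {1..n}" "j \<in> {1..n}" "k \<in> {1..n}" "l \<in> {1..n}" for i j k l
    using that by (simp add: FRT_C_ccoef gen_fmult_gen D_def w_def sol_r_def sigma_involutive gamma_involutive)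
  have "{FRT_C n (ccoef sigma gamma) i j k l | i j k l.
          i \<in> {1..n} \<and> j \<in> {1..n} \<and> k \<in> {1..n} \<and> l \<in> {1..n}} = D ` ?M"
  proof (intro equalityI subsetI)
    fix x :: "'k free_alg"
    assume "x \<in> {FRT_C n (ccoef sigma gamma) i j k l | i j k l.
          i \<in> {1..n} \<and> j \<in> {1..n} \<and> k \<in> {1..n} \<and> l \<in> {1..n}}"
    then obtain i j k l where ijkl: "i \<in> {1..n}" "j \<in> {1..n}" "k \<in> {1..n}" "l \<in> {1..n}"
      and x: "x = FRT_C n (ccoef sigma gamma) i j k l"
      by blast
    have "((sigma i j, gamma j i), (k, l)) \<in> ?M"
      using ijkl sigma_closed gamma_closed by simp
    then show "x \<in> D ` ?M"
      unfolding x C_D[OF ijkl] by (rule imageI)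
  next
    fix x assume "x \<in> D ` ?M"
    then obtain a b k l where abkl: "a \<in> {1..n}" "b \<in> {1..n}" "k \<in> {1..n}" "l \<in> {1..n}"
      and "x = D ((a, b), (k, l))"
      by auto
    then have "x = FRT_C n (ccoef sigma gamma) (sigma a b) (gamma b a) k l"
      using C_D[of "sigma a b" "gamma b a" k l] sigma_closed gamma_closed
        sigma_involutive gamma_involutive by simp
    then show "x \<in> {FRT_C n (ccoef sigma gamma) i j k l | i j k l.
          i \<in> {1..n} \<and> j \<in> {1..n} \<and> k \<in> {1..n} \<and> l \<in> {1..n}}"
      using abkl sigma_closed gamma_closed by blast
  qed
  moreover have "inj_on w ?M"
    by (auto simp: w_def inj_on_def)
  ultimately have "2 * card ((\<lambda>x. {x, - x}) `
      ({FRT_C n (ccoef sigma gamma) i j k l :: 'k free_alg | i j k l.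
          i \<in> {1..n} \<and> j \<in> {1..n} \<and> k \<in> {1..n} \<and> l \<in> {1..n}} - {0}))
    = card {m \<in> ?M. ?R m \<noteq> m}"
    using card_sign_classes_single_diff[of ?M ?R w] R_closed R_R unfolding D_def by simp
  also have "{m \<in> ?M. ?R m \<noteq> m} = ?M - {p \<in> ?X2. ?r p = p} \<times> {p \<in> ?X2. ?r p = p}"
    by auto
  also have "card \<dots> = n ^ 4 - n ^ 2"
    using card_fixed_points[OF bij]
    by (subst card_Diff_subset) (auto simp: card_cartesian_product power4_eq_xxxx power2_eq_square)
  also have "\<dots> = 2 * ((n ^ 2) choose 2)"
    by (simp add: choose_two diff_mult_distrib2 power4_eq_xxxx power2_eq_square)
  finally show ?thesis
    by simp
qed

end

theorem lemma3p1:
  fixes n :: nat and sigma gamma :: "nat \<Rightarrow> nat \<Rightarrow> nat"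
  assumes sol: "nondeg_invol_solution n sigma gamma"
  defines "C \<equiv> FRT_C n (ccoef sigma gamma :: nat \<Rightarrow> nat \<Rightarrow> nat \<Rightarrow> nat \<Rightarrow> 'k::field)"
  defines "X \<equiv> {1..n}"
  shows
    "(\<forall>i\<in>X. \<forall>j\<in>X. \<forall>k\<in>X. \<forall>l\<in>X.
        C i j k l = T (sigma i j) k \<cdot>\<^sub>F T (gamma j i) l - T i (sigma k l) \<cdot>\<^sub>F T j (gamma l k))
   \<and> (\<forall>i\<in>X. \<forall>j\<in>X. \<forall>k\<in>X. \<forall>l\<in>X.
        C (sigma i j) (gamma j i) k l
          = T i k \<cdot>\<^sub>F T j l - T (sigma i j) (sigma k l) \<cdot>\<^sub>F T (gamma j i) (gamma l k))
   \<and> (\<forall>i\<in>X. \<forall>j\<in>X. \<forall>k\<in>X. \<forall>l\<in>X.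
        C (sigma i j) (gamma j i) (sigma k l) (gamma l k) = - C i j k l)
   \<and> (\<forall>i\<in>X. \<forall>j\<in>X. \<forall>k\<in>X. \<forall>l\<in>X.
        C i j (sigma k l) (gamma l k) = - C (sigma i j) (gamma j i) k l)
   \<and> (\<forall>i\<in>X. \<forall>j\<in>X. \<forall>k\<in>X. \<forall>l\<in>X. sol_r sigma gamma (i, j) = (i, j) \<longrightarrow>
        C i j (sigma k l) (gamma l k) = C i j k l \<or> C i j (sigma k l) (gamma l k) = - C i j k l)
   \<and> (\<forall>i\<in>X. \<forall>j\<in>X. \<forall>k\<in>X. \<forall>l\<in>X. sol_r sigma gamma (k, l) = (k, l) \<longrightarrow>
        C (sigma i j) (gamma j i) k l = C i j k l \<or> C (sigma i j) (gamma j i) k l = - C i j k l)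
   \<and> (\<forall>i\<in>X. \<forall>j\<in>X. \<forall>k\<in>X. \<forall>l\<in>X.
        sol_r sigma gamma (i, j) = (i, j) \<and> sol_r sigma gamma (k, l) = (k, l) \<longrightarrow> C i j k l = 0)
   \<and> card ((\<lambda>x. {x, - x}) ` ({C i j k l | i j k l. i \<in> X \<and> j \<in> X \<and> k \<in> X \<and> l \<in> X} - {0}))
       = (n ^ 2) choose 2"
proof -
  interpret sol_involution n sigma gamma
    using sol by (rule nondeg_invol_solution_imp_sol_involution)
  have bij: "\<And>a. a \<in> {1..n} \<Longrightarrow> bij_betw (sigma a) {1..n} {1..n}"
    using sol unfolding nondeg_invol_solution_def by blast
  have C_eq: "C i j k l = T (sigma i j) k \<cdot>\<^sub>F T (gamma j i) l - T i (sigma k l) \<cdot>\<^sub>F T j (gamma l k)"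
    if "i \<in> X" "j \<in> X" "k \<in> X" "l \<in> X" for i j k l
    using that FRT_C_ccoef unfolding C_def X_def by blast
  have "card ((\<lambda>x. {x, - x}) ` ({C i j k l | i j k l. i \<in> X \<and> j \<in> X \<and> k \<in> X \<and> l \<in> X} - {0}))
      = (n ^ 2) choose 2"
    unfolding C_def X_def by (rule card_sign_classes_FRT_C[OF bij])
  then show ?thesis
    using sigma_closed[folded X_def] gamma_closed[folded X_def]
      sigma_involutive[folded X_def] gamma_involutive[folded X_def]
    by (simp add: C_eq sol_r_def)
qed

end
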